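(* For all $x,h\in\mathbb R$ with $h\ne0$, $$\exp\Big(\tfrac{(x^2-1)h^2}{24}-\tfrac{x^4h^4}{960}\Big)<\frac{\Phi(x+\frac h2)-\Phi(x-\frac h2)}{h\,\phi(x)}<\exp\Big(\tfrac{(x^2-1)h^2}{24}+\tfrac{h^4}{1440}\Big).$$ Moreover, $$\log\Big(\frac{\Phi(x+\frac h2)-\Phi(x-\frac h2)}{h\,\phi(x)}\Big)=\frac{(x^2-1)h^2}{24}+\frac{(-x^4-4x^2+2)h^4}{2880}+O(h^6)$$ uniformly for $x,h$ in bounded sets (with $h\ne 0$), where $\max_{x\in\mathbb R}(-x^4-4x^2+2)=2$ and $\min_{x\in\mathbb R\setminus\{0\}}(-x^4-4x^2+2)/x^4=-3$ (as an infimum over $x\neq 0$).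
   Context: $\Phi$ is the standard normal distribution function and $\phi=\Phi'$ its density. *)

theory Defs
  imports "HOL-Probability.Probability"
begin

definition std_normal_cdf :: "real \<Rightarrow> real" where
  "std_normal_cdf x = (LBINT t:{..x}. std_normal_density t)"

definition ratio31 :: "real \<Rightarrow> real \<Rightarrow> real" where
  "ratio31 x h = (std_normal_cdf (x + h/2) - std_normal_cdf (x - h/2)) / (h * std_normal_density x)"

end

theory Submission
  imports Defs
begin

text \<open>With \<open>a = h/2\<close>, the ratio equals \<open>N(a)/a\<close> where \<open>N(a)\<close> is the integral of
  \<open>cosh (x t) * exp (-t\<^sup>2/2)\<close> over \<open>[0, a]\<close>: this is what
  \<open>\<phi>(x \<plusminus> t) = \<phi>(x) exp (\<mp>x t - t\<^sup>2/2)\<close> turns \<open>\<Phi>(x + a) - \<Phi>(x - a)\<close> into.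
  Both bounds follow by integrating pointwise bounds on this integrand from \<open>0\<close>:
  \<open>cosh y \<le> exp (y\<^sup>2/6) (1 + y\<^sup>2/3)\<close> gives the upper bound directly, while
  \<open>cosh y > exp (y\<^sup>2/2 - y\<^sup>4/12)\<close> combined with the tangent line of \<open>exp\<close> gives the lower
  one (a Jensen-type argument). The expansion of the logarithm comes from Taylor
  expanding the integrand with remainders uniform on bounded sets, and from \<open>ln\<close> being
  Lipschitz above the positive lower bound of the first part.\<close>

section \<open>Comparing functions through their derivatives\<close>

lemma DERIV_le_imp_le:
  fixes f g f' g' :: "real \<Rightarrow> real"
  assumes "a \<le> b" "f a \<le> g a"
    and f: "\<And>t. a \<le> t \<Longrightarrow> t \<le> b \<Longrightarrow> (f has_real_derivative f' t) (at t)"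
    and g: "\<And>t. a \<le> t \<Longrightarrow> t \<le> b \<Longrightarrow> (g has_real_derivative g' t) (at t)"
    and le: "\<And>t. a \<le> t \<Longrightarrow> t \<le> b \<Longrightarrow> f' t \<le> g' t"
  shows "f b \<le> g b"
proof -
  have "g a - f a \<le> g b - f b"
  proof (rule DERIV_nonneg_imp_nondecreasing[OF \<open>a \<le> b\<close>, of "\<lambda>t. g t - f t"])
    fix t assume "a \<le> t" "t \<le> b"
    then show "\<exists>y. ((\<lambda>t. g t - f t) has_real_derivative y) (at t) \<and> 0 \<le> y"
      using DERIV_diff[OF g f] le by (metis diff_ge_0_iff_ge)
  qed
  with assms(2) show ?thesis by simp
qed

lemma DERIV_less_imp_less:
  fixes f g f' g' :: "real \<Rightarrow> real"
  assumes "a < c" "c \<le> b" "f a \<le> g a"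
    and f: "\<And>t. a \<le> t \<Longrightarrow> t \<le> b \<Longrightarrow> (f has_real_derivative f' t) (at t)"
    and g: "\<And>t. a \<le> t \<Longrightarrow> t \<le> b \<Longrightarrow> (g has_real_derivative g' t) (at t)"
    and le: "\<And>t. a \<le> t \<Longrightarrow> t \<le> b \<Longrightarrow> f' t \<le> g' t"
    and less: "\<And>t. a < t \<Longrightarrow> t \<le> c \<Longrightarrow> f' t < g' t"
  shows "f b < g b"
proof -
  define d where "d t = g t - f t" for t
  have d: "(d has_real_derivative g' t - f' t) (at t)" if "a \<le> t" "t \<le> b" for t
    unfolding d_def using that by (intro DERIV_diff g f)
  have "d a \<le> d ((a + c) / 2)"
  proof (rule DERIV_nonneg_imp_nondecreasing[of _ _ d])
    fix t assume "a \<le> t" "t \<le> (a + c) / 2"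
    moreover have "t \<le> b" using calculation assms(1,2) by simp
    ultimately show "\<exists>y. (d has_real_derivative y) (at t) \<and> 0 \<le> y"
      using d le by (intro exI[of _ "g' t - f' t"]) simp
  qed (use assms(1) in simp)
  also have "\<dots> < d c"
  proof (rule DERIV_pos_imp_increasing[of _ _ d])
    fix t assume "(a + c) / 2 \<le> t" "t \<le> c"
    moreover have "a < t" "t \<le> b" using calculation assms(1,2) by simp_all
    ultimately show "\<exists>y. (d has_real_derivative y) (at t) \<and> 0 < y"
      using d less by (intro exI[of _ "g' t - f' t"]) simp
  qed (use assms(1) in simp)
  also have "\<dots> \<le> d b"
  proof (rule DERIV_nonneg_imp_nondecreasing[OF \<open>c \<le> b\<close>, of d])
    fix t assume "c \<le> t" "t \<le> b"
    moreover have "a \<le> t" using calculation assms(1) by simp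
    ultimately show "\<exists>y. (d has_real_derivative y) (at t) \<and> 0 \<le> y"
      using d le by (intro exI[of _ "g' t - f' t"]) simp
  qed
  finally show ?thesis using assms(3) by (simp add: d_def)
qed

section \<open>Elementary bounds for \<open>exp\<close> and \<open>cosh\<close>\<close>

lemma exp_le_exp_square_cubic:
  fixes y :: real assumes "0 \<le> y"
  shows "exp y \<le> exp (y^2/6) * (1 + y + y^2/3 + y^3/9)"
proof -
  have "1 \<le> exp (y^2/6 - y) * (1 + y + y^2/3 + y^3/9)"
  proof (rule DERIV_le_imp_le[where f = "\<lambda>_. 1" and f' = "\<lambda>_. 0", OF assms])
    fix t :: real
    show "((\<lambda>y. exp (y^2/6 - y) * (1 + y + y^2/3 + y^3/9)) has_real_derivative
        exp (t^2/6 - t) * (t^2/3 + t^4/27)) (at t)"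
      by (auto intro!: derivative_eq_intros)
        (simp add: algebra_simps power2_eq_square power3_eq_cube power4_eq_xxxx add_divide_distrib diff_divide_distrib)
  qed auto
  then have "exp y * 1 \<le> exp y * (exp (y^2/6 - y) * (1 + y + y^2/3 + y^3/9))"
    by (rule mult_left_mono) simp
  then show ?thesis
    by (simp add: mult.assoc[symmetric] flip: exp_add)
qed

lemma cosh_le_exp_square:
  fixes y :: real
  shows "cosh y \<le> exp (y^2/6) * (1 + y^2/3)"
proof -
  have *: "cosh y \<le> exp (y^2/6) * (1 + y^2/3)" if "0 \<le> y" for y :: real
  proof -
    have "(exp (2*y) + 1)/2 \<le> exp (y^2/6 + y) * (1 + y^2/3)"
    proof (rule DERIV_le_imp_le[OF that])
      fix t :: real assume "0 \<le> t"
      show "((\<lambda>y. (exp (2*y) + 1)/2) has_real_derivative exp t * exp t) (at t)"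
        by (auto intro!: derivative_eq_intros simp flip: exp_add)
      show "((\<lambda>y. exp (y^2/6 + y) * (1 + y^2/3)) has_real_derivative
          exp t * (exp (t^2/6) * (1 + t + t^2/3 + t^3/9))) (at t)"
        by (auto intro!: derivative_eq_intros simp: exp_add)
          (simp add: algebra_simps power2_eq_square power3_eq_cube add_divide_distrib diff_divide_distrib)
      show "exp t * exp t \<le> exp t * (exp (t^2/6) * (1 + t + t^2/3 + t^3/9))"
        using exp_le_exp_square_cubic[OF \<open>0 \<le> t\<close>] by simp
    qed simp
    then have "(exp (2*y) + 1)/2 * exp (-y) \<le> exp (y^2/6 + y) * (1 + y^2/3) * exp (-y)"
      by (rule mult_right_mono) simp
    moreover have "(exp (2*y) + 1)/2 * exp (-y) = cosh y"
      by (simp add: cosh_field_def algebra_simps flip: exp_add)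
    moreover have "exp (y^2/6 + y) * (1 + y^2/3) * exp (-y) = exp (y^2/6) * (1 + y^2/3)"
      by (simp add: algebra_simps flip: exp_add)
    ultimately show ?thesis by simp
  qed
  show ?thesis
  proof (cases "0 \<le> y")
    case False
    then show ?thesis using *[of "-y"] by simp
  qed (rule *)
qed

lemma exp_less_quadratic:
  fixes s :: real assumes "0 < s"
  shows "exp (-(s/3) - s^2/90) < 1 - s/3 + 2 * s^2 / 45"
proof -
  have "1 < (1 - s/3 + 2 * s^2 / 45) * exp (s/3 + s^2/90)"
  proof (rule DERIV_less_imp_less[where f = "\<lambda>_. 1" and f' = "\<lambda>_. 0", OF assms order_refl])
    fix t :: real
    show "((\<lambda>s. (1 - s/3 + 2 * s^2 / 45) * exp (s/3 + s^2/90)) has_real_derivative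
        exp (t/3 + t^2/90) * (t^2/135 + 2 * t^3 / 2025)) (at t)"
      by (auto intro!: derivative_eq_intros)
        (simp add: algebra_simps power2_eq_square power3_eq_cube add_divide_distrib diff_divide_distrib)
    show "0 < exp (t/3 + t^2/90) * (t^2/135 + 2 * t^3 / 2025)" if "0 < t"
      using that by (simp add: add_pos_pos)
  qed auto
  then have "exp (-(s/3) - s^2/90) * 1 < exp (-(s/3) - s^2/90) * ((1 - s/3 + 2 * s^2 / 45) * exp (s/3 + s^2/90))"
    by (rule mult_strict_left_mono) simp
  also have "\<dots> = 1 - s/3 + 2 * s^2 / 45"
    by (simp flip: exp_add)
  finally show ?thesis by simp
qed

lemma sinh_le_mult_cosh:
  fixes y :: real assumes "0 \<le> y"
  shows "sinh y \<le> y * cosh y"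
proof (rule DERIV_le_imp_le[OF assms])
  fix t :: real assume "0 \<le> t"
  show "(sinh has_real_derivative cosh t) (at t)"
    by (auto intro!: derivative_eq_intros)
  show "((\<lambda>y. y * cosh y) has_real_derivative cosh t + t * sinh t) (at t)"
    by (auto intro!: derivative_eq_intros)
  show "cosh t \<le> cosh t + t * sinh t"
    using \<open>0 \<le> t\<close> by simp
qed simp

lemma exp_less_cosh:
  fixes y :: real assumes "y \<noteq> 0"
  shows "exp (y^2/2 - y^4/12) < cosh y"
proof -
  have *: "exp (y^2/2 - y^4/12) < cosh y" if "0 < y" for y :: real
  proof -
    define M where "M y = sinh y - (y - y^3/3) * cosh y" for y :: real
    have M_pos: "0 < M t" if "0 < t" for t :: real
    proof -
      have "(t - t^3/3) * cosh t < sinh t"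
      proof (rule DERIV_less_imp_less[OF that order_refl])
        fix u :: real
        show "((\<lambda>y. (y - y^3/3) * cosh y) has_real_derivative
            cosh u - (u * (u * cosh u - sinh u) + u^3/3 * sinh u)) (at u)"
          by (auto intro!: derivative_eq_intros)
            (simp add: algebra_simps power2_eq_square power3_eq_cube)
        show "(sinh has_real_derivative cosh u) (at u)"
          by (auto intro!: derivative_eq_intros)
        show "cosh u - (u * (u * cosh u - sinh u) + u^3/3 * sinh u) \<le> cosh u" if "0 \<le> u"
        proof -
          have "0 \<le> u * (u * cosh u - sinh u) + u^3/3 * sinh u"
            using that sinh_le_mult_cosh[OF that] by (intro add_nonneg_nonneg mult_nonneg_nonneg) auto
          then show ?thesis by simp
        qed
        show "cosh u - (u * (u * cosh u - sinh u) + u^3/3 * sinh u) < cosh u" if "0 < u"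
        proof -
          have "0 < u * (u * cosh u - sinh u) + u^3/3 * sinh u"
            using that sinh_le_mult_cosh[of u] by (intro add_nonneg_pos mult_nonneg_nonneg mult_pos_pos) auto
          then show ?thesis by simp
        qed
      qed simp
      then show ?thesis by (simp add: M_def)
    qed
    have "1 < cosh y * exp (y^4/12 - y^2/2)"
    proof (rule DERIV_less_imp_less[where f = "\<lambda>_. 1" and f' = "\<lambda>_. 0", OF that order_refl])
      fix t :: real
      show "((\<lambda>y. cosh y * exp (y^4/12 - y^2/2)) has_real_derivative exp (t^4/12 - t^2/2) * M t) (at t)"
        unfolding M_def
        by (auto intro!: derivative_eq_intros)
          (simp add: algebra_simps power2_eq_square power3_eq_cube power4_eq_xxxx add_divide_distrib diff_divide_distrib)
      show "0 \<le> exp (t^4/12 - t^2/2) * M t" if "0 \<le> t"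
        using that M_pos[of t] by (cases "t = 0") (auto simp: M_def)
      show "0 < exp (t^4/12 - t^2/2) * M t" if "0 < t"
        using M_pos[OF that] by simp
    qed auto
    then have "exp (y^2/2 - y^4/12) * 1 < exp (y^2/2 - y^4/12) * (cosh y * exp (y^4/12 - y^2/2))"
      by (rule mult_strict_left_mono) simp
    then show ?thesis
      by (simp add: mult.left_commute flip: exp_add)
  qed
  show ?thesis
  proof (cases "0 < y")
    case False
    with assms show ?thesis using *[of "-y"] by simp
  qed (rule *)
qed

lemma cosh_le_exp_abs: "cosh (y::real) \<le> exp \<bar>y\<bar>"
  by (cases "0 \<le> y") (auto simp: cosh_field_def)

lemma exp_taylor2_remainder:
  fixes u :: real
  shows "\<bar>exp u - (1 + u + u^2/2)\<bar> \<le> exp \<bar>u\<bar> * \<bar>u\<bar>^3 / 6"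
proof -
  obtain \<xi> where \<xi>: "\<bar>\<xi>\<bar> \<le> \<bar>u\<bar>" "exp u = (\<Sum>m<3. u^m / fact m) + exp \<xi> / fact 3 * u^3"
    using Maclaurin_exp_le[of u 3] by blast
  have "\<bar>exp u - (1 + u + u^2/2)\<bar> = exp \<xi> * \<bar>u\<bar>^3 / 6"
    using \<xi>(2) by (simp add: lessThan_nat_numeral fact_numeral abs_mult power_abs)
  also have "\<dots> \<le> exp \<bar>u\<bar> * \<bar>u\<bar>^3 / 6"
    using \<xi>(1) by (intro divide_right_mono mult_right_mono) auto
  finally show ?thesis .
qed

lemma exp_taylor5_remainder:
  fixes u :: real
  shows "\<bar>exp u - (1 + u + u^2/2 + u^3/6 + u^4/24 + u^5/120)\<bar> \<le> exp \<bar>u\<bar> * u^6 / 720"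
proof -
  obtain \<xi> where \<xi>: "\<bar>\<xi>\<bar> \<le> \<bar>u\<bar>" "exp u = (\<Sum>m<6. u^m / fact m) + exp \<xi> / fact 6 * u^6"
    using Maclaurin_exp_le[of u 6] by blast
  have "\<bar>exp u - (1 + u + u^2/2 + u^3/6 + u^4/24 + u^5/120)\<bar> = exp \<xi> * u^6 / 720"
    using \<xi>(2) by (simp add: lessThan_nat_numeral fact_numeral abs_mult)
  also have "\<dots> \<le> exp \<bar>u\<bar> * u^6 / 720"
    using \<xi>(1) by (intro divide_right_mono mult_right_mono) auto
  finally show ?thesis .
qed

lemma cosh_taylor4_remainder:
  fixes y :: real
  shows "\<bar>cosh y - (1 + y^2/2 + y^4/24)\<bar> \<le> exp \<bar>y\<bar> * y^6 / 720"
proof -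
  define P where "P = exp y - (1 + y + y^2/2 + y^3/6 + y^4/24 + y^5/120)"
  define Q where "Q = exp (-y) - (1 + (-y) + (-y)^2/2 + (-y)^3/6 + (-y)^4/24 + (-y)^5/120)"
  have PQ: "cosh y - (1 + y^2/2 + y^4/24) = (P + Q) / 2"
    by (simp add: P_def Q_def cosh_field_def field_simps)
  have "\<bar>P\<bar> \<le> exp \<bar>y\<bar> * y^6 / 720" "\<bar>Q\<bar> \<le> exp \<bar>y\<bar> * y^6 / 720"
    unfolding P_def Q_def using exp_taylor5_remainder[of y] exp_taylor5_remainder[of "-y"] by simp_all
  then show ?thesis
    unfolding PQ using abs_triangle_ineq[of P Q] by simp
qed

section \<open>The normal mass of a symmetric window\<close>

lemma std_normal_cdf_diff:
  assumes "w \<le> v"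
  shows "std_normal_cdf v - std_normal_cdf w = (LBINT t=w..v. std_normal_density t)"
proof -
  have integrable: "set_integrable lborel A std_normal_density" if "A \<in> sets lborel" for A
    unfolding set_integrable_def
    by (rule integrable_mult_indicator[OF that]) (rule integrable_normal_density, simp)
  have "{..v} = {..w} \<union> {w<..v}" using assms by auto
  then have "std_normal_cdf v = std_normal_cdf w + (LBINT t:{w<..v}. std_normal_density t)"
    unfolding std_normal_cdf_def by (auto intro!: set_integral_Un integrable)
  then show ?thesis
    using interval_integral_Ioc[OF assms, of std_normal_density] by simp
qed

lemma has_real_derivative_std_normal_cdf:
  "(std_normal_cdf has_real_derivative std_normal_density x) (at x)"
proof -
  have "continuous_on {x-1..x+1} std_normal_density"
    unfolding std_normal_density_def by (intro continuous_intros) auto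
  then have "((\<lambda>u. LBINT t=(x-1)..u. std_normal_density t) has_vector_derivative std_normal_density x)
      (at x within {x-1..x+1})"
    by (intro interval_integral_FTC2) auto
  then have "((\<lambda>u. std_normal_cdf (x-1) + (LBINT t=(x-1)..u. std_normal_density t))
      has_vector_derivative std_normal_density x) (at x within {x-1..x+1})"
    by (auto intro!: derivative_eq_intros)
  then have "(std_normal_cdf has_vector_derivative std_normal_density x) (at x within {x-1..x+1})"
    by (rule has_vector_derivative_weaken[where S = "{x-1..x+1}"]) (auto simp flip: std_normal_cdf_diff)
  then show ?thesis
    by (simp add: has_real_derivative_iff_has_vector_derivative at_within_Icc_at)
qed

lemma std_normal_density_add:
  "std_normal_density (x + t) = std_normal_density x * exp (- (x * t)) * exp (- (t^2) / 2)"
proof -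
  have "- ((x + t)^2) / 2 = - (x^2) / 2 + (- (x * t)) + (- (t^2) / 2)"
    by (simp add: field_simps power2_eq_square)
  then show ?thesis
    by (simp only: std_normal_density_def exp_add mult.assoc)
qed

definition window_mass :: "real \<Rightarrow> real \<Rightarrow> real" where
  "window_mass x a = (std_normal_cdf (x + a) - std_normal_cdf (x - a)) / (2 * std_normal_density x)"

lemma has_real_derivative_window_mass:
  "(window_mass x has_real_derivative cosh (x * a) * exp (- (a^2) / 2)) (at a)"
proof -
  note [derivative_intros] = has_real_derivative_std_normal_cdf[THEN DERIV_chain2]
  have "((\<lambda>a. std_normal_cdf (x + a) - std_normal_cdf (x - a)) has_real_derivative
      std_normal_density (x + a) + std_normal_density (x - a)) (at a)"
    by (auto intro!: derivative_eq_intros)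
  also have "std_normal_density (x + a) + std_normal_density (x - a)
      = 2 * std_normal_density x * (cosh (x * a) * exp (- (a^2) / 2))"
    using std_normal_density_add[of x a] std_normal_density_add[of x "-a"]
    by (simp add: cosh_field_def algebra_simps)
  finally show ?thesis
    unfolding window_mass_def[abs_def] using normal_density_pos[of 1 0 x]
    by (auto dest: DERIV_cdivide[where c = "2 * std_normal_density x"])
qed

lemma window_mass_0 [simp]: "window_mass x 0 = 0"
  by (simp add: window_mass_def)

lemma ratio31_eq_window_mass: "h \<noteq> 0 \<Longrightarrow> ratio31 x h = window_mass x (h/2) / (h/2)"
  using normal_density_pos[of 1 0 x] by (simp add: ratio31_def window_mass_def field_simps)

lemma ratio31_minus: "ratio31 x (- h) = ratio31 x h"
  by (simp add: ratio31_def divide_simps)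

section \<open>Two-sided bounds on the ratio\<close>

lemma cosh_gauss_less:
  fixes x t :: real assumes "t \<noteq> 0"
  shows "cosh (x * t) * exp (- (t^2) / 2)
    < exp ((x^2 - 1) * t^2 / 6 + t^4 / 90) * (1 + (x^2 - 1) * t^2 / 3 + 2 * t^4 / 45)"
proof -
  define A where "A = x^2 * t^2 / 3"
  define e where "e = exp (- (t^2/3) - (t^2)^2/90)"
  have "0 < t^2" "0 \<le> (t^2)^2"
    using assms by simp_all
  then have "- (t^2/3) - (t^2)^2/90 < 0"
    by linarith
  then have "e < 1"
    unfolding e_def by simp
  then have "A * e \<le> A"
    by (simp add: A_def mult_left_le)
  moreover have "e < 1 - t^2/3 + 2 * (t^2)^2 / 45"
    unfolding e_def using assms by (intro exp_less_quadratic) simp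
  ultimately have "(1 + A) * e < 1 + A + (- (t^2/3) + 2 * (t^2)^2 / 45)"
    by (simp add: distrib_right)
  also have "\<dots> = 1 + (x^2 - 1) * t^2 / 3 + 2 * t^4 / 45"
    by (simp add: A_def field_simps flip: power_mult)
  finally have Ae: "(1 + A) * e < 1 + (x^2 - 1) * t^2 / 3 + 2 * t^4 / 45" .
  have "exp (- (t^2) / 2) = exp (- (t^2) / 6 + t^4 / 90) * e"
    unfolding e_def by (simp flip: exp_add power_mult)
  then have "cosh (x * t) * exp (- (t^2) / 2) = cosh (x * t) * (exp (- (t^2) / 6 + t^4 / 90) * e)"
    by simp
  also have "\<dots> \<le> exp (x^2 * t^2 / 6) * (1 + A) * (exp (- (t^2) / 6 + t^4 / 90) * e)"
    using cosh_le_exp_square[of "x * t"]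
    by (intro mult_right_mono) (simp_all add: A_def e_def power_mult_distrib)
  also have "\<dots> = exp (x^2 * t^2 / 6) * exp (- (t^2) / 6 + t^4 / 90) * ((1 + A) * e)"
    by (simp only: ac_simps)
  also have "\<dots> < exp (x^2 * t^2 / 6) * exp (- (t^2) / 6 + t^4 / 90)
      * (1 + (x^2 - 1) * t^2 / 3 + 2 * t^4 / 45)"
    using Ae by simp
  also have "exp (x^2 * t^2 / 6) * exp (- (t^2) / 6 + t^4 / 90) = exp ((x^2 - 1) * t^2 / 6 + t^4 / 90)"
    by (simp add: algebra_simps diff_divide_distrib flip: exp_add)
  finally show ?thesis .
qed

lemma exp_less_cosh_gauss:
  fixes x t :: real assumes "x \<noteq> 0" "t \<noteq> 0"
  shows "exp ((x^2 - 1) * t^2 / 2 - x^4 * t^4 / 12) < cosh (x * t) * exp (- (t^2) / 2)"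
proof -
  have "(x^2 - 1) * t^2 / 2 - x^4 * t^4 / 12 = ((x*t)^2/2 - (x*t)^4/12) + (- (t^2) / 2)"
    by (simp add: power_mult_distrib algebra_simps diff_divide_distrib)
  then have "exp ((x^2 - 1) * t^2 / 2 - x^4 * t^4 / 12) = exp ((x*t)^2/2 - (x*t)^4/12) * exp (- (t^2) / 2)"
    by (simp only: exp_add)
  then show ?thesis
    using exp_less_cosh[of "x * t"] assms by simp
qed

lemma exp_le_cosh_gauss:
  "exp (((x::real)^2 - 1) * t^2 / 2 - x^4 * t^4 / 12) \<le> cosh (x * t) * exp (- (t^2) / 2)"
  using exp_less_cosh_gauss[of x t] by (cases "x = 0 \<or> t = 0") auto

lemma window_mass_less:
  fixes x a :: real assumes "0 < a"
  shows "window_mass x a < a * exp ((x^2 - 1) * a^2 / 6 + a^4 / 90)"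
proof (rule DERIV_less_imp_less[OF assms order_refl])
  fix t :: real
  show "(window_mass x has_real_derivative cosh (x * t) * exp (- (t^2) / 2)) (at t)"
    by (rule has_real_derivative_window_mass)
  show "((\<lambda>a. a * exp ((x^2 - 1) * a^2 / 6 + a^4 / 90)) has_real_derivative
      exp ((x^2 - 1) * t^2 / 6 + t^4 / 90) * (1 + (x^2 - 1) * t^2 / 3 + 2 * t^4 / 45)) (at t)"
    by (auto intro!: derivative_eq_intros)
      (simp add: algebra_simps power2_eq_square power3_eq_cube power4_eq_xxxx add_divide_distrib diff_divide_distrib)
  show "cosh (x * t) * exp (- (t^2) / 2)
      < exp ((x^2 - 1) * t^2 / 6 + t^4 / 90) * (1 + (x^2 - 1) * t^2 / 3 + 2 * t^4 / 45)" if "0 < t"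
    using cosh_gauss_less[of t x] that by simp
  show "cosh (x * t) * exp (- (t^2) / 2)
      \<le> exp ((x^2 - 1) * t^2 / 6 + t^4 / 90) * (1 + (x^2 - 1) * t^2 / 3 + 2 * t^4 / 45)"
    using cosh_gauss_less[of t x] by (cases "t = 0") auto
qed simp

lemma window_mass_greater:
  fixes x a :: real assumes "0 < a"
  defines "c \<equiv> (x^2 - 1) * a^2 / 6 - x^4 * a^4 / 60"
  shows "a * exp c < window_mass x a"
proof -
  define g where "g t = (x^2 - 1) * t^2 / 2 - x^4 * t^4 / 12" for t
  \<comment> \<open>Jensen: the tangent line of \<open>exp\<close> at \<open>c\<close>, composed with \<open>g\<close>, integrates over \<open>[0, a]\<close>
    to exactly \<open>a * exp c\<close>, because the integral of \<open>g\<close> over \<open>[0, a]\<close> is \<open>a * c\<close>.\<close>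
  have tangent: "exp c * (1 - c + g t) \<le> exp (g t)" for t
    using mult_left_mono[OF exp_ge_add_one_self[of "g t - c"], of "exp c"]
    by (simp add: algebra_simps flip: exp_add)
  have "exp c * (a * (1 - c) + (x^2 - 1) * a^3 / 6 - x^4 * a^5 / 60) < window_mass x a"
  proof (rule DERIV_less_imp_less[where c = "a/2" and b = a and g = "window_mass x"])
    fix t :: real
    show "((\<lambda>t. exp c * (t * (1 - c) + (x^2 - 1) * t^3 / 6 - x^4 * t^5 / 60)) has_real_derivative
        exp c * (1 - c + g t)) (at t)"
      unfolding g_def
      by (auto intro!: derivative_eq_intros)
        (simp add: algebra_simps power2_eq_square power3_eq_cube power4_eq_xxxx add_divide_distrib diff_divide_distrib)
    show "(window_mass x has_real_derivative cosh (x * t) * exp (- (t^2) / 2)) (at t)"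
      by (rule has_real_derivative_window_mass)
    show "exp c * (1 - c + g t) \<le> cosh (x * t) * exp (- (t^2) / 2)"
      using tangent[of t] exp_le_cosh_gauss[of x t] by (simp add: g_def)
    show "exp c * (1 - c + g t) < cosh (x * t) * exp (- (t^2) / 2)" if "0 < t" "t \<le> a/2"
    proof (cases "x = 0")
      case False
      then show ?thesis
        using tangent[of t] exp_less_cosh_gauss[of x t] that by (simp add: g_def)
    next
      case True
      have "t^2 \<le> (a/2)^2" using that by (intro power_mono) auto
      moreover have "0 < t^2" using that by simp
      ultimately have "g t \<noteq> c" by (simp add: g_def c_def True power_divide; linarith)
      then have "exp c * (1 - (c - g t)) < exp c * exp (- (c - g t))"
        using exp_minus_greater[of "c - g t"] by simp
      then show ?thesis
        using True by (simp add: g_def algebra_simps flip: exp_add)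
    qed
  qed (use assms in auto)
  moreover have "a * (1 - c) + (x^2 - 1) * a^3 / 6 - x^4 * a^5 / 60 = a"
    by (simp add: c_def algebra_simps eval_nat_numeral diff_divide_distrib)
  ultimately show ?thesis
    by (simp add: mult.commute)
qed

lemma ratio31_bounds_pos:
  fixes x h :: real assumes "0 < h"
  shows "exp ((x^2 - 1) * h^2 / 24 - x^4 * h^4 / 960) < ratio31 x h \<and>
    ratio31 x h < exp ((x^2 - 1) * h^2 / 24 + h^4 / 1440)"
proof -
  have a: "0 < h/2" using assms by simp
  have "(x^2 - 1) * h^2 / 24 - x^4 * h^4 / 960 = (x^2 - 1) * (h/2)^2 / 6 - x^4 * (h/2)^4 / 60"
    "(x^2 - 1) * h^2 / 24 + h^4 / 1440 = (x^2 - 1) * (h/2)^2 / 6 + (h/2)^4 / 90"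
    by (simp_all add: power_divide)
  then show ?thesis
    using window_mass_greater[OF a, of x] window_mass_less[OF a, of x] a assms
    by (simp add: ratio31_eq_window_mass pos_less_divide_eq pos_divide_less_eq mult.commute)
qed

lemma ratio31_bounds:
  fixes x h :: real assumes "h \<noteq> 0"
  shows "exp ((x^2 - 1) * h^2 / 24 - x^4 * h^4 / 960) < ratio31 x h \<and>
    ratio31 x h < exp ((x^2 - 1) * h^2 / 24 + h^4 / 1440)"
proof (cases "0 < h")
  case False
  with assms have "0 < - h" by simp
  from ratio31_bounds_pos[OF this] show ?thesis by (simp add: ratio31_minus)
qed (rule ratio31_bounds_pos)

section \<open>Uniform expansion of the logarithm\<close>

lemma cosh_gauss_taylor_product:
  fixes x t :: real
  shows "(1 + (x*t)^2/2 + (x*t)^4/24) * (1 - t^2/2 + t^4/8)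
      - (1 + (x^2 - 1) * t^2 / 2 + (x^4 - 6 * x^2 + 3) * t^4 / 24)
    = (x^2/16 - x^4/48 + x^4 * t^2/192) * t^6"
  by (simp add: field_simps power_mult_distrib eval_nat_numeral)

lemma abs_le_imp_even_powers_le:
  fixes x R :: real assumes "\<bar>x\<bar> \<le> R"
  shows "x^2 \<le> R^2" "x^4 \<le> R^4" "x^6 \<le> R^6" "x^8 \<le> R^8"
  using power_mono[OF assms abs_ge_zero] by (metis power_even_abs even_numeral)+

lemma cosh_gauss_taylor:
  fixes R :: real
  shows "\<exists>K. \<forall>x t. \<bar>x\<bar> \<le> R \<longrightarrow> \<bar>t\<bar> \<le> R \<longrightarrow>
    \<bar>cosh (x * t) * exp (- (t^2) / 2) - (1 + (x^2 - 1) * t^2 / 2 + (x^4 - 6 * x^2 + 3) * t^4 / 24)\<bar>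
      \<le> K * t^6"
proof (intro exI allI impI)
  fix x t :: real assume x: "\<bar>x\<bar> \<le> R" and t: "\<bar>t\<bar> \<le> R"
  define c4 where "c4 = 1 + (x*t)^2/2 + (x*t)^4/24"
  define e4 where "e4 = 1 - t^2/2 + t^4/8"
  define q where "q = 1 + (x^2 - 1) * t^2 / 2 + (x^4 - 6 * x^2 + 3) * t^4 / 24"
  note xR = abs_le_imp_even_powers_le[OF x] and tR = abs_le_imp_even_powers_le[OF t]
  have xt: "\<bar>x * t\<bar> \<le> R^2"
    unfolding abs_mult power2_eq_square using x t by (intro mult_mono) auto
  have cosh: "\<bar>cosh (x * t)\<bar> \<le> exp (R^2)"
    using order_trans[OF cosh_le_exp_abs exp_mono[OF xt]] by simp
  have exp: "\<bar>exp (- (t^2) / 2) - e4\<bar> \<le> exp (R^2/2) * (t^6/48)"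
  proof -
    have "\<bar>exp (- (t^2) / 2) - e4\<bar> \<le> exp (t^2/2) * (t^6/48)"
      using exp_taylor2_remainder[of "- (t^2) / 2"]
      by (simp add: e4_def power_divide flip: power_mult)
    also have "\<dots> \<le> exp (R^2/2) * (t^6/48)"
      using tR by (intro mult_right_mono) auto
    finally show ?thesis .
  qed
  have cosh_c4: "\<bar>cosh (x * t) - c4\<bar> \<le> exp (R^2) * R^6 / 720 * t^6"
  proof -
    have "\<bar>cosh (x * t) - c4\<bar> \<le> exp \<bar>x * t\<bar> * x^6 / 720 * t^6"
      using cosh_taylor4_remainder[of "x * t"] by (simp add: c4_def power_mult_distrib)
    also have "\<dots> \<le> exp (R^2) * R^6 / 720 * t^6"
      using xt xR by (intro mult_right_mono divide_right_mono mult_mono) auto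
    finally show ?thesis .
  qed
  have "0 \<le> t^2" "0 \<le> t^4" "0 \<le> R^2" "0 \<le> R^4"
    by simp_all
  then have e4: "\<bar>e4\<bar> \<le> 1 + R^2/2 + R^4/8"
    using tR unfolding e4_def abs_le_iff by (intro conjI; linarith)
  have poly: "\<bar>c4 * e4 - q\<bar> \<le> (R^2/16 + R^4/48 + R^6/192) * t^6"
  proof -
    have "x^4 * t^2 \<le> R^4 * R^2"
      using xR tR by (intro mult_mono) auto
    then have "x^4 * t^2 \<le> R^6"
      by (simp flip: power_add)
    moreover have "0 \<le> x^2" "0 \<le> x^4" "0 \<le> x^4 * t^2" "0 \<le> R^2" "0 \<le> R^4"
      by simp_all
    ultimately have "\<bar>x^2/16 - x^4/48 + x^4 * t^2/192\<bar> \<le> R^2/16 + R^4/48 + R^6/192"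
      using xR unfolding abs_le_iff by (intro conjI; linarith)
    then show ?thesis
      unfolding c4_def e4_def q_def cosh_gauss_taylor_product abs_mult by (simp add: mult_right_mono)
  qed
  define P1 where "P1 = cosh (x * t) * (exp (- (t^2) / 2) - e4)"
  define P2 where "P2 = (cosh (x * t) - c4) * e4"
  have "cosh (x * t) * exp (- (t^2) / 2) - q = P1 + P2 + (c4 * e4 - q)"
    by (simp add: P1_def P2_def algebra_simps)
  then have "\<bar>cosh (x * t) * exp (- (t^2) / 2) - q\<bar> \<le> \<bar>P1\<bar> + \<bar>P2\<bar> + \<bar>c4 * e4 - q\<bar>"
    using abs_triangle_ineq[of "P1 + P2" "c4 * e4 - q"] abs_triangle_ineq[of P1 P2] by linarith
  also have "\<dots> \<le> exp (R^2) * (exp (R^2/2) * (t^6/48)) + exp (R^2) * R^6 / 720 * t^6 * (1 + R^2/2 + R^4/8)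
      + (R^2/16 + R^4/48 + R^6/192) * t^6"
    unfolding P1_def P2_def abs_mult using cosh exp cosh_c4 e4 poly by (intro add_mono mult_mono) auto
  also have "\<dots> = (exp (R^2) * exp (R^2/2) / 48 + exp (R^2) * R^6 / 720 * (1 + R^2/2 + R^4/8)
      + (R^2/16 + R^4/48 + R^6/192)) * t^6"
    by (simp add: algebra_simps)
  finally show "\<bar>cosh (x * t) * exp (- (t^2) / 2) - q\<bar>
      \<le> (exp (R^2) * exp (R^2/2) / 48 + exp (R^2) * R^6 / 720 * (1 + R^2/2 + R^4/8)
        + (R^2/16 + R^4/48 + R^6/192)) * t^6" .
qed

lemma window_mass_taylor:
  fixes R :: real
  shows "\<exists>K. \<forall>x a. \<bar>x\<bar> \<le> R \<longrightarrow> 0 \<le> a \<longrightarrow> a \<le> R \<longrightarrow>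
    \<bar>window_mass x a - (a + (x^2 - 1) * a^3 / 6 + (x^4 - 6 * x^2 + 3) * a^5 / 120)\<bar> \<le> K * a^7"
proof -
  obtain K where K: "\<And>x t. \<bar>x\<bar> \<le> R \<Longrightarrow> \<bar>t\<bar> \<le> R \<Longrightarrow>
      \<bar>cosh (x * t) * exp (- (t^2) / 2) - (1 + (x^2 - 1) * t^2 / 2 + (x^4 - 6 * x^2 + 3) * t^4 / 24)\<bar>
        \<le> K * t^6"
    using cosh_gauss_taylor[of R] by blast
  have "\<bar>window_mass x a - (a + (x^2 - 1) * a^3 / 6 + (x^4 - 6 * x^2 + 3) * a^5 / 120)\<bar> \<le> K / 7 * a^7"
    if x: "\<bar>x\<bar> \<le> R" and a: "0 \<le> a" "a \<le> R" for x a
  proof -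
    define Q where "Q c t = t + (x^2 - 1) * t^3 / 6 + (x^4 - 6 * x^2 + 3) * t^5 / 120 + c * (K / 7 * t^7)"
      for c t :: real
    have Q: "(Q c has_real_derivative
        1 + (x^2 - 1) * t^2 / 2 + (x^4 - 6 * x^2 + 3) * t^4 / 24 + c * (K * t^6)) (at t)" for c t
      unfolding Q_def by (auto intro!: derivative_eq_intros)
        (simp add: algebra_simps power2_eq_square power3_eq_cube power4_eq_xxxx add_divide_distrib diff_divide_distrib)
    have K': "\<bar>cosh (x * t) * exp (- (t^2) / 2) - (1 + (x^2 - 1) * t^2 / 2 + (x^4 - 6 * x^2 + 3) * t^4 / 24)\<bar>
        \<le> K * t^6" if "0 \<le> t" "t \<le> a" for t
      using K[OF x, of t] that a by simp
    have "window_mass x a \<le> Q 1 a"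
    proof (rule DERIV_le_imp_le[OF a(1) _ has_real_derivative_window_mass Q])
      fix t assume "0 \<le> t" "t \<le> a"
      from K'[OF this] show "cosh (x * t) * exp (- (t^2) / 2)
          \<le> 1 + (x^2 - 1) * t^2 / 2 + (x^4 - 6 * x^2 + 3) * t^4 / 24 + 1 * (K * t^6)"
        unfolding abs_le_iff by simp
    qed (simp add: Q_def)
    moreover have "Q (-1) a \<le> window_mass x a"
    proof (rule DERIV_le_imp_le[OF a(1) _ Q has_real_derivative_window_mass])
      fix t assume "0 \<le> t" "t \<le> a"
      from K'[OF this] show "1 + (x^2 - 1) * t^2 / 2 + (x^4 - 6 * x^2 + 3) * t^4 / 24 + (-1) * (K * t^6)
          \<le> cosh (x * t) * exp (- (t^2) / 2)"
        unfolding abs_le_iff by simp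
    qed (simp add: Q_def)
    ultimately show ?thesis
      unfolding Q_def abs_le_iff by simp
  qed
  then show ?thesis by blast
qed

lemma exp_quadratic_taylor:
  fixes \<alpha> \<beta> s A B S :: real
  assumes "\<bar>\<alpha>\<bar> \<le> A" "\<bar>\<beta>\<bar> \<le> B" "\<bar>s\<bar> \<le> S"
  shows "\<bar>exp (\<alpha> * s + \<beta> * s^2) - (1 + \<alpha> * s + (\<beta> + \<alpha>^2/2) * s^2)\<bar>
    \<le> (exp ((A + B * S) * S) * (A + B * S)^3 / 6 + A * B + B^2 * S / 2) * \<bar>s\<bar>^3"
proof -
  define p where "p = \<alpha> * s + \<beta> * s^2"
  define D where "D = (\<alpha> * \<beta> + \<beta>^2 * s / 2) * s^3"
  have AB: "0 \<le> A" "0 \<le> B" "0 \<le> S" using assms by auto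
  have "\<bar>p\<bar> \<le> \<bar>\<alpha> * s\<bar> + \<bar>\<beta> * s^2\<bar>"
    unfolding p_def by (rule abs_triangle_ineq)
  also have "\<dots> = \<bar>\<alpha>\<bar> * \<bar>s\<bar> + \<bar>\<beta>\<bar> * \<bar>s\<bar> * \<bar>s\<bar>"
    by (simp add: abs_mult power2_eq_square)
  also have "\<dots> \<le> A * \<bar>s\<bar> + B * S * \<bar>s\<bar>"
    using assms AB by (intro add_mono mult_mono) auto
  finally have p: "\<bar>p\<bar> \<le> (A + B * S) * \<bar>s\<bar>"
    by (simp add: algebra_simps)
  also have "\<dots> \<le> (A + B * S) * S"
    using assms AB by (intro mult_left_mono) auto
  finally have "exp \<bar>p\<bar> \<le> exp ((A + B * S) * S)"
    by simp
  then have "exp \<bar>p\<bar> * \<bar>p\<bar>^3 / 6 \<le> exp ((A + B * S) * S) * ((A + B * S) * \<bar>s\<bar>)^3 / 6"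
    using p by (intro divide_right_mono mult_mono power_mono) auto
  then have exp: "\<bar>exp p - (1 + p + p^2/2)\<bar> \<le> exp ((A + B * S) * S) * (A + B * S)^3 / 6 * \<bar>s\<bar>^3"
    using exp_taylor2_remainder[of p] by (simp add: power_mult_distrib)
  have "\<bar>\<alpha> * \<beta> + \<beta>^2 * s / 2\<bar> \<le> \<bar>\<alpha> * \<beta>\<bar> + \<bar>\<beta>^2 * s / 2\<bar>"
    by (rule abs_triangle_ineq)
  also have "\<dots> = \<bar>\<alpha>\<bar> * \<bar>\<beta>\<bar> + \<bar>\<beta>\<bar>^2 * \<bar>s\<bar> / 2"
    by (simp add: abs_mult power_abs)
  also have "\<dots> \<le> A * B + B^2 * S / 2"
    using assms AB by (intro add_mono mult_mono divide_right_mono power_mono) auto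
  finally have D: "\<bar>D\<bar> \<le> (A * B + B^2 * S / 2) * \<bar>s\<bar>^3"
    unfolding D_def abs_mult power_abs by (rule mult_right_mono) simp
  have "exp p - (1 + \<alpha> * s + (\<beta> + \<alpha>^2/2) * s^2) = (exp p - (1 + p + p^2/2)) + D"
    by (simp add: p_def D_def field_simps power2_eq_square power3_eq_cube)
  then have "\<bar>exp p - (1 + \<alpha> * s + (\<beta> + \<alpha>^2/2) * s^2)\<bar> \<le> \<bar>exp p - (1 + p + p^2/2)\<bar> + \<bar>D\<bar>"
    by (simp only: abs_triangle_ineq)
  also have "\<dots> \<le> (exp ((A + B * S) * S) * (A + B * S)^3 / 6 + A * B + B^2 * S / 2) * \<bar>s\<bar>^3"
    using exp D by (simp add: algebra_simps)
  finally show ?thesis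
    unfolding p_def .
qed

lemma ln_diff_le:
  fixes u v m :: real assumes "0 < m" "m \<le> u" "m \<le> v"
  shows "\<bar>ln u - ln v\<bar> \<le> \<bar>u - v\<bar> / m"
proof -
  have *: "ln u - ln v \<le> \<bar>u - v\<bar> / m" if "0 < m" "m \<le> u" "m \<le> v" for u v :: real
  proof -
    have "ln u - ln v = ln (u / v)" using that by (simp add: ln_div)
    also have "\<dots> \<le> u / v - 1" using that by (intro ln_le_minus_one) auto
    also have "\<dots> = (u - v) / v" using that by (simp add: field_simps)
    also have "\<dots> \<le> \<bar>u - v\<bar> / m" using that by (intro frac_le) auto
    finally show ?thesis .
  qed
  show ?thesis
    using *[OF assms] *[OF assms(1,3,2)] by (simp add: abs_le_iff abs_minus_commute)
qed

lemma ratio31_exponents_lower_bound: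
  fixes x h R :: real assumes x: "\<bar>x\<bar> \<le> R" and h: "\<bar>h\<bar> \<le> R"
  shows "- (R^2 + R^6 + R^8) \<le> (x^2 - 1) * h^2 / 24 - x^4 * h^4 / 960"
    and "- (R^2 + R^6 + R^8) \<le> (x^2 - 1) * h^2 / 24 + (2 - 4 * x^2 - x^4) * h^4 / 2880"
proof -
  note xR = abs_le_imp_even_powers_le[OF x] and hR = abs_le_imp_even_powers_le[OF h]
  have "x^2 * h^4 \<le> R^2 * R^4" "x^4 * h^4 \<le> R^4 * R^4"
    using xR hR by (intro mult_mono; simp)+
  then have "x^2 * h^4 \<le> R^6" "x^4 * h^4 \<le> R^8"
    by (simp_all flip: power_add)
  moreover have "0 \<le> x^2 * h^2" "0 \<le> h^4" "0 \<le> R^2" "0 \<le> R^6" "0 \<le> R^8"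
    by simp_all
  ultimately have bounds: "- (R^2 + R^6 + R^8) \<le> x^2 * h^2 / 24 - h^2 / 24 - x^4 * h^4 / 960"
    "- (R^2 + R^6 + R^8) \<le> x^2 * h^2 / 24 - h^2 / 24 + h^4 / 1440 - x^2 * h^4 / 720 - x^4 * h^4 / 2880"
    using hR by linarith+
  show "- (R^2 + R^6 + R^8) \<le> (x^2 - 1) * h^2 / 24 - x^4 * h^4 / 960"
    using bounds(1) by (simp add: algebra_simps diff_divide_distrib)
  show "- (R^2 + R^6 + R^8) \<le> (x^2 - 1) * h^2 / 24 + (2 - 4 * x^2 - x^4) * h^4 / 2880"
    using bounds(2) by (simp add: algebra_simps diff_divide_distrib add_divide_distrib)
qed

lemma ratio31_taylor:
  fixes R :: real
  shows "\<exists>K. \<forall>x h. \<bar>x\<bar> \<le> R \<longrightarrow> 0 < h \<longrightarrow> h \<le> R \<longrightarrow>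
    \<bar>ratio31 x h - (1 + (x^2 - 1) * h^2 / 24 + (x^4 - 6 * x^2 + 3) * h^4 / 1920)\<bar> \<le> K * h^6"
proof -
  obtain K where K: "\<And>x a. \<bar>x\<bar> \<le> R \<Longrightarrow> 0 \<le> a \<Longrightarrow> a \<le> R \<Longrightarrow>
      \<bar>window_mass x a - (a + (x^2 - 1) * a^3 / 6 + (x^4 - 6 * x^2 + 3) * a^5 / 120)\<bar> \<le> K * a^7"
    using window_mass_taylor[of R] by blast
  have "\<bar>ratio31 x h - (1 + (x^2 - 1) * h^2 / 24 + (x^4 - 6 * x^2 + 3) * h^4 / 1920)\<bar> \<le> K / 64 * h^6"
    if "\<bar>x\<bar> \<le> R" "0 < h" "h \<le> R" for x h
  proof -
    define a where "a = h / 2"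
    have a: "0 < a" "a \<le> R" using that by (simp_all add: a_def)
    have "ratio31 x h - (1 + (x^2 - 1) * h^2 / 24 + (x^4 - 6 * x^2 + 3) * h^4 / 1920)
        = (window_mass x a - (a + (x^2 - 1) * a^3 / 6 + (x^4 - 6 * x^2 + 3) * a^5 / 120)) / a"
      using that by (simp add: ratio31_eq_window_mass a_def field_simps eval_nat_numeral)
    also have "\<bar>\<dots>\<bar> \<le> K * a^7 / a"
      unfolding abs_divide using K[OF that(1) less_imp_le a(2)] a by (simp add: divide_right_mono)
    also have "\<dots> = K / 64 * h^6"
      using a by (simp add: a_def eval_nat_numeral field_simps)
    finally show ?thesis .
  qed
  then show ?thesis by blast
qed

lemma ln_ratio31_taylor:
  fixes R :: real
  shows "\<exists>C. \<forall>x h. \<bar>x\<bar> \<le> R \<longrightarrow> 0 < h \<longrightarrow> h \<le> R \<longrightarrow>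
    \<bar>ln (ratio31 x h) - ((x^2 - 1) * h^2 / 24 + (2 - 4 * x^2 - x^4) * h^4 / 2880)\<bar> \<le> C * h^6"
proof -
  obtain K where K: "\<And>x h. \<bar>x\<bar> \<le> R \<Longrightarrow> 0 < h \<Longrightarrow> h \<le> R \<Longrightarrow>
      \<bar>ratio31 x h - (1 + (x^2 - 1) * h^2 / 24 + (x^4 - 6 * x^2 + 3) * h^4 / 1920)\<bar> \<le> K * h^6"
    using ratio31_taylor[of R] by blast
  define A where "A = (R^2 + 1) / 24"
  define B where "B = (2 + 4 * R^2 + R^4) / 2880"
  define K' where "K' = exp ((A + B * R^2) * R^2) * (A + B * R^2)^3 / 6 + A * B + B^2 * R^2 / 2"
  define m where "m = exp (- (R^2 + R^6 + R^8))"
  have "\<bar>ln (ratio31 x h) - ((x^2 - 1) * h^2 / 24 + (2 - 4 * x^2 - x^4) * h^4 / 2880)\<bar>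
      \<le> (K + K') / m * h^6"
    if x: "\<bar>x\<bar> \<le> R" and h: "0 < h" "h \<le> R" for x h
  proof -
    define p where "p = (x^2 - 1) * h^2 / 24 + (2 - 4 * x^2 - x^4) * h^4 / 2880"
    define T where "T = 1 + (x^2 - 1) * h^2 / 24 + (x^4 - 6 * x^2 + 3) * h^4 / 1920"
    have hR: "\<bar>h\<bar> \<le> R" using h by simp
    note xR = abs_le_imp_even_powers_le[OF x] and hR2 = abs_le_imp_even_powers_le[OF hR]
    have nonneg: "0 \<le> x^2" "0 \<le> x^4" "0 \<le> R^2" "0 \<le> R^4"
      by simp_all
    have "x^2 - 1 \<le> R^2 + 1" "1 - x^2 \<le> R^2 + 1"
      "2 - 4 * x^2 - x^4 \<le> 2 + 4 * R^2 + R^4" "4 * x^2 + x^4 - 2 \<le> 2 + 4 * R^2 + R^4"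
      using nonneg xR by linarith+
    then have "\<bar>(x^2 - 1) / 24\<bar> \<le> A" "\<bar>(2 - 4 * x^2 - x^4) / 2880\<bar> \<le> B"
      unfolding A_def B_def by (simp_all add: abs_le_iff)
    moreover have "\<bar>h^2\<bar> \<le> R^2"
      using hR2 by simp
    ultimately have "\<bar>exp ((x^2 - 1) / 24 * h^2 + (2 - 4 * x^2 - x^4) / 2880 * (h^2)^2)
        - (1 + (x^2 - 1) / 24 * h^2 + ((2 - 4 * x^2 - x^4) / 2880 + ((x^2 - 1) / 24)^2 / 2) * (h^2)^2)\<bar>
        \<le> K' * \<bar>h^2\<bar>^3"
      unfolding K'_def by (rule exp_quadratic_taylor)
    moreover have "(x^2 - 1) / 24 * h^2 + (2 - 4 * x^2 - x^4) / 2880 * (h^2)^2 = p"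
      by (simp add: p_def field_simps flip: power_mult)
    moreover have "1 + (x^2 - 1) / 24 * h^2 + ((2 - 4 * x^2 - x^4) / 2880 + ((x^2 - 1) / 24)^2 / 2) * (h^2)^2 = T"
    proof -
      have "x^4 = (x^2)^2" "h^4 = (h^2)^2" by (simp_all flip: power_mult)
      then show ?thesis
        unfolding T_def by (simp add: field_simps power2_eq_square)
    qed
    ultimately have "\<bar>exp p - T\<bar> \<le> K' * h^6"
      by (simp flip: power_mult)
    moreover have "\<bar>ratio31 x h - T\<bar> \<le> K * h^6"
      unfolding T_def using K[OF x h] .
    moreover have "\<bar>ratio31 x h - exp p\<bar> \<le> \<bar>ratio31 x h - T\<bar> + \<bar>exp p - T\<bar>"
      using abs_triangle_ineq[of "ratio31 x h - T" "T - exp p"] by (simp add: abs_minus_commute)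
    ultimately have close: "\<bar>ratio31 x h - exp p\<bar> \<le> (K + K') * h^6"
      by (simp add: distrib_right)
    have m_pos: "0 < m"
      by (simp add: m_def)
    have "m \<le> exp ((x^2 - 1) * h^2 / 24 - x^4 * h^4 / 960)"
      using ratio31_exponents_lower_bound(1)[OF x hR] by (simp add: m_def)
    then have "m \<le> ratio31 x h"
      using ratio31_bounds[of h x] h by simp
    moreover have "m \<le> exp p"
      using ratio31_exponents_lower_bound(2)[OF x hR] by (simp add: m_def p_def)
    ultimately have "\<bar>ln (ratio31 x h) - ln (exp p)\<bar> \<le> \<bar>ratio31 x h - exp p\<bar> / m"
      by (rule ln_diff_le[OF m_pos])
    also have "\<dots> \<le> (K + K') / m * h^6"
      using close m_pos by (simp add: divide_right_mono)
    finally show ?thesis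
      by (simp add: p_def)
  qed
  then show ?thesis by blast
qed

lemma quartic_le_2: "2 - 4 * x^2 - x^4 \<le> (2::real)"
proof -
  have "0 \<le> x^2" "0 \<le> x^4"
    by simp_all
  then show ?thesis by linarith
qed

lemma Inf_quartic_ratio: "(INF x \<in> - {0::real}. (2 - 4 * x^2 - x^4) / x^4) = -3"
proof (rule cInf_eq_minimum)
  show "-3 \<in> (\<lambda>x. (2 - 4 * x^2 - x^4) / x^4) ` (- {0::real})"
    by (rule image_eqI[of _ _ 1]) auto
  fix y assume "y \<in> (\<lambda>x. (2 - 4 * x^2 - x^4) / x^4) ` (- {0::real})"
  then obtain x :: real where "x \<noteq> 0" and y: "y = (2 - 4 * x^2 - x^4) / x^4"
    by auto
  \<comment> \<open>\<open>2 - 4x\<^sup>2 - x\<^sup>4 + 3x\<^sup>4 = 2 (x\<^sup>2 - 1)\<^sup>2\<close>\<close>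
  have "-3 * x^4 \<le> 2 - 4 * x^2 - x^4"
    using zero_le_power2[of "x^2 - 1"] by (simp add: power2_eq_square power4_eq_xxxx algebra_simps)
  with \<open>x \<noteq> 0\<close> show "-3 \<le> y"
    unfolding y by (simp add: le_divide_eq)
qed

theorem lemma3p1:
  shows "(\<forall>x h::real. h \<noteq> 0 \<longrightarrow>
           exp ((x^2 - 1) * h^2 / 24 - x^4 * h^4 / 960) < ratio31 x h \<and>
           ratio31 x h < exp ((x^2 - 1) * h^2 / 24 + h^4 / 1440))
       \<and> (\<forall>R>0::real. \<exists>C::real. \<forall>x h::real. \<bar>x\<bar> \<le> R \<longrightarrow> \<bar>h\<bar> \<le> R \<longrightarrow> h \<noteq> 0 \<longrightarrow>
           \<bar>ln (ratio31 x h) - ((x^2 - 1) * h^2 / 24 + (2 - 4 * x^2 - x^4) * h^4 / 2880)\<bar>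
             \<le> C * h^6)
       \<and> (\<forall>x::real. 2 - 4 * x^2 - x^4 \<le> 2) \<and> (\<exists>x::real. 2 - 4 * x^2 - x^4 = 2)
       \<and> (INF x \<in> - {0::real}. (2 - 4 * x^2 - x^4) / x^4) = -3"
proof (intro conjI allI impI)
  fix R :: real
  obtain C where C: "\<And>x h. \<bar>x\<bar> \<le> R \<Longrightarrow> 0 < h \<Longrightarrow> h \<le> R \<Longrightarrow>
      \<bar>ln (ratio31 x h) - ((x^2 - 1) * h^2 / 24 + (2 - 4 * x^2 - x^4) * h^4 / 2880)\<bar> \<le> C * h^6"
    using ln_ratio31_taylor[of R] by blast
  show "\<exists>C. \<forall>x h. \<bar>x\<bar> \<le> R \<longrightarrow> \<bar>h\<bar> \<le> R \<longrightarrow> h \<noteq> 0 \<longrightarrow>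
      \<bar>ln (ratio31 x h) - ((x^2 - 1) * h^2 / 24 + (2 - 4 * x^2 - x^4) * h^4 / 2880)\<bar> \<le> C * h^6"
  proof (intro exI allI impI)
    fix x h :: real assume "\<bar>x\<bar> \<le> R" "\<bar>h\<bar> \<le> R" "h \<noteq> 0"
    then show "\<bar>ln (ratio31 x h) - ((x^2 - 1) * h^2 / 24 + (2 - 4 * x^2 - x^4) * h^4 / 2880)\<bar> \<le> C * h^6"
      using C[of x h] C[of x "- h"] by (cases "0 < h") (auto simp: ratio31_minus)
  qed
qed (use ratio31_bounds quartic_le_2 Inf_quartic_ratio in \<open>auto intro: exI[of _ 0]\<close>)

end
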